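(* Let $n$ and $0<n_1<\cdots<n_d<n$ be integers with $m_1=n_1$, $m_k=n_k-n_{k-1}$ ($2\le k\le d$), $m_{d+1}=n-n_d$, and equip $\mathrm{Flag}(n_1,\dots,n_d;n)=\{(VJ_1V^{\mathsf T},\dots,VJ_{d+1}V^{\mathsf T}):V\in\mathrm{O}(n)\}\subseteq(\mathbb{R}^{n\times n})^{d+1}$ with the metric induced by the Frobenius inner product. Let $V(t)$ be a differentiable curve in $\mathrm{O}(n)$ with $\Lambda(t)=V(t)^{\mathsf T}\dot V(t)$, $\Lambda(k,k)\equiv0$ ($k=1,\dots,d+1$), and $c(t)=V(t)(J_1,\dots,J_{d+1})V(t)^{\mathsf T}$. Let $Y(t)=V(t)\big(X(t)J_1-J_1X(t),\dots,X(t)J_{d+1}-J_{d+1}X(t)\big)V(t)^{\mathsf T}$ with $X(t)\in\mathfrak{so}(n)$ differentiable and $X(k,k)\equiv0$. Then $Y$ is parallel along $c$ if and only if \[ \dot X(t)=\tfrac12\,\pi\big([X(t),\Lambda(t)]\big). \]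
   Context: $J_k=\operatorname{diag}(-I_{m_1},\dots,-I_{m_{k-1}},I_{m_k},-I_{m_{k+1}},\dots,-I_{m_{d+1}})$ for $k=1,\dots,d+1$. $V(M_1,\dots,M_{d+1})V^{\mathsf T}$ denotes $(VM_1V^{\mathsf T},\dots,VM_{d+1}V^{\mathsf T})$. For an $n\times n$ matrix $M$, $M(p,q)$ denotes its $(p,q)$ block in the partition $n=m_1+\cdots+m_{d+1}$; for $M\in\mathfrak{so}(n)$, $\pi(M)$ is obtained by setting all diagonal blocks $M(p,p)$ to zero; $[X,\Lambda]=X\Lambda-\Lambda X$. $Y$ is parallel along $c$ iff the orthogonal projection of $\dot Y(t)$ onto $\mathbb{T}_{c(t)}\mathrm{Flag}$ vanishes for all $t$. *)

theory Defs
  imports Complex_Main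
begin

text \<open>Real n x n matrices are represented as functions nat => nat => real; entries with an
index >= n are meant to be 0 (predicate is_mat). Indices run over 0..<n.\<close>

type_synonym rmat = "nat \<Rightarrow> nat \<Rightarrow> real"

definition is_mat :: "nat \<Rightarrow> rmat \<Rightarrow> bool" where
  "is_mat n A \<longleftrightarrow> (\<forall>i j. (n \<le> i \<or> n \<le> j) \<longrightarrow> A i j = 0)"

definition mzero :: rmat where "mzero = (\<lambda>i j. 0)"

definition mident :: "nat \<Rightarrow> rmat" where
  "mident n = (\<lambda>i j. if i < n \<and> j < n \<and> i = j then 1 else 0)"

definition mmul :: "nat \<Rightarrow> rmat \<Rightarrow> rmat \<Rightarrow> rmat" where
  "mmul n A B = (\<lambda>i j. if i < n \<and> j < n then (\<Sum>k<n. A i k * B k j) else 0)"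

definition mtr :: "rmat \<Rightarrow> rmat" where
  "mtr A = (\<lambda>i j. A j i)"

definition madd :: "rmat \<Rightarrow> rmat \<Rightarrow> rmat" where
  "madd A B = (\<lambda>i j. A i j + B i j)"

definition mdiff :: "rmat \<Rightarrow> rmat \<Rightarrow> rmat" where
  "mdiff A B = (\<lambda>i j. A i j - B i j)"

definition mscale :: "real \<Rightarrow> rmat \<Rightarrow> rmat" where
  "mscale c A = (\<lambda>i j. c * A i j)"

definition comm :: "nat \<Rightarrow> rmat \<Rightarrow> rmat \<Rightarrow> rmat" where
  "comm n X L = mdiff (mmul n X L) (mmul n L X)"

definition orth :: "nat \<Rightarrow> rmat \<Rightarrow> bool" where
  "orth n V \<longleftrightarrow> is_mat n V \<and> mmul n (mtr V) V = mident n"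

definition skew :: "nat \<Rightarrow> rmat \<Rightarrow> bool" where
  "skew n X \<longleftrightarrow> is_mat n X \<and> mtr X = mscale (-1) X"

text \<open>Block structure. nk 1 < ... < nk d are the integers n_1,...,n_d; bnd k is n_k with
bnd 0 = 0 and bnd (d+1) = n. Block k (1 <= k <= d+1) consists of indices
bnd (k-1) <= i < bnd k (0-based indices).\<close>
definition bnd :: "nat \<Rightarrow> nat \<Rightarrow> (nat \<Rightarrow> nat) \<Rightarrow> nat \<Rightarrow> nat" where
  "bnd n d nk k = (if k = 0 then 0 else if k \<le> d then nk k else n)"

definition blk :: "nat \<Rightarrow> nat \<Rightarrow> (nat \<Rightarrow> nat) \<Rightarrow> nat \<Rightarrow> nat" where
  "blk n d nk i = (LEAST k. i < bnd n d nk k)"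

definition Jmat :: "nat \<Rightarrow> nat \<Rightarrow> (nat \<Rightarrow> nat) \<Rightarrow> nat \<Rightarrow> rmat" where
  "Jmat n d nk k = (\<lambda>i j. if i < n \<and> j < n \<and> i = j
       then (if blk n d nk i = k then 1 else -1) else 0)"

definition offdiag :: "nat \<Rightarrow> nat \<Rightarrow> (nat \<Rightarrow> nat) \<Rightarrow> rmat \<Rightarrow> rmat" where
  "offdiag n d nk M = (\<lambda>i j. if blk n d nk i = blk n d nk j then 0 else M i j)"

definition diag_blocks_zero :: "nat \<Rightarrow> nat \<Rightarrow> (nat \<Rightarrow> nat) \<Rightarrow> rmat \<Rightarrow> bool" where
  "diag_blocks_zero n d nk M \<longleftrightarrow>
     (\<forall>i<n. \<forall>j<n. blk n d nk i = blk n d nk j \<longrightarrow> M i j = 0)"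

text \<open>Tuples in (R^{n x n})^{d+1}: functions nat => rmat, components indexed by k = 1..d+1
(other components are zero).\<close>
type_synonym rtup = "nat \<Rightarrow> rmat"

definition tup :: "nat \<Rightarrow> (nat \<Rightarrow> rmat) \<Rightarrow> rtup" where
  "tup d F = (\<lambda>k. if 1 \<le> k \<and> k \<le> d + 1 then F k else mzero)"

definition conj_tup :: "nat \<Rightarrow> nat \<Rightarrow> rmat \<Rightarrow> (nat \<Rightarrow> rmat) \<Rightarrow> rtup" where
  "conj_tup n d V M = tup d (\<lambda>k. mmul n (mmul n V (M k)) (mtr V))"

definition Flag :: "nat \<Rightarrow> nat \<Rightarrow> (nat \<Rightarrow> nat) \<Rightarrow> rtup set" where
  "Flag n d nk = {conj_tup n d V (Jmat n d nk) | V. orth n V}"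

definition tinner :: "nat \<Rightarrow> nat \<Rightarrow> rtup \<Rightarrow> rtup \<Rightarrow> real" where
  "tinner n d P Q = (\<Sum>k\<in>{1..d+1}. \<Sum>i<n. \<Sum>j<n. P k i j * Q k i j)"

definition tdiff :: "rtup \<Rightarrow> rtup \<Rightarrow> rtup" where
  "tdiff P Q = (\<lambda>k i j. P k i j - Q k i j)"

definition tzero :: rtup where "tzero = (\<lambda>k i j. 0)"

definition mat_deriv :: "(real \<Rightarrow> rmat) \<Rightarrow> rmat \<Rightarrow> real \<Rightarrow> bool" where
  "mat_deriv A A' t \<longleftrightarrow> (\<forall>i j. ((\<lambda>s. A s i j) has_real_derivative A' i j) (at t))"

definition tup_deriv :: "(real \<Rightarrow> rtup) \<Rightarrow> rtup \<Rightarrow> real \<Rightarrow> bool" where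
  "tup_deriv G G' t \<longleftrightarrow> (\<forall>k i j. ((\<lambda>s. G s k i j) has_real_derivative G' k i j) (at t))"

definition tangent :: "nat \<Rightarrow> nat \<Rightarrow> (nat \<Rightarrow> nat) \<Rightarrow> rtup \<Rightarrow> rtup set" where
  "tangent n d nk p = {v. \<exists>G. (\<forall>s. G s \<in> Flag n d nk) \<and> G 0 = p \<and> tup_deriv G v 0}"

definition is_orth_proj :: "nat \<Rightarrow> nat \<Rightarrow> rtup set \<Rightarrow> rtup \<Rightarrow> rtup \<Rightarrow> bool" where
  "is_orth_proj n d T v w \<longleftrightarrow> w \<in> T \<and> (\<forall>u\<in>T. tinner n d (tdiff v w) u = 0)"

definition parallel_along :: "nat \<Rightarrow> nat \<Rightarrow> (nat \<Rightarrow> nat) \<Rightarrow> (real \<Rightarrow> rtup) \<Rightarrow> (real \<Rightarrow> rtup) \<Rightarrow> bool" where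
  "parallel_along n d nk c Y \<longleftrightarrow>
     (\<forall>t. \<exists>Y'. tup_deriv Y Y' t \<and> is_orth_proj n d (tangent n d nk (c t)) Y' tzero)"

end

theory Submission
  imports Defs "Jordan_Normal_Form.Determinant"
begin

(* Write P_k = U J_k U^T for the components of a flag.  Pulled back by V, a tangent vector of the
   flag manifold at c = V (J_1, ..., J_(d+1)) V^T is a tuple (W_k) with W_k J_k + J_k W_k = 0 and
   W_1 + ... + W_(d+1) = 0: differentiate P_k^2 = I and P_1 + ... + P_(d+1) = (1 - d) I along a
   curve of flags.  On the other hand, rotating in the coordinate plane (a, b) yields the tangent
   vector with W_k = [E_ab, J_k], where E_ab is the elementary skew-symmetric matrix.
   Pulled back by V, dY/dt is the tuple A_k = Lambda C_k + C_k' + C_k Lambda^T with C_k = [X, J_k],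
   and for indices a, b in different blocks p, q one computes
   A_p(a,b) - A_q(a,b) = 2 [X, Lambda](a,b) - 4 X'(a,b), which is skew in (a, b).
   If all these differences vanish, the first description makes dY/dt normal to the flag manifold;
   conversely, pairing dY/dt with the rotation vectors makes the differences symmetric in (a, b),
   hence zero. *)

section \<open>Matrix algebra\<close>

lemma sum_two_terms:
  assumes "a < (n::nat)" "b < n" "a \<noteq> b"
    and "\<And>l. l < n \<Longrightarrow> l \<noteq> a \<Longrightarrow> l \<noteq> b \<Longrightarrow> f l = 0"
  shows "(\<Sum>l<n. f l) = f a + f b"
proof -
  have "(\<Sum>l<n. f l) = (\<Sum>l\<in>{a,b}. f l)"
    using assms by (intro sum.mono_neutral_right) auto
  then show ?thesis
    using assms by simp
qed

lemma mmul_apply: "i < n \<Longrightarrow> j < n \<Longrightarrow> mmul n A B i j = (\<Sum>l<n. A i l * B l j)"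
  by (simp add: mmul_def)

lemma is_mat_mmul [simp]: "is_mat n (mmul n A B)"
  by (auto simp: is_mat_def mmul_def)

lemma is_mat_mident [simp]: "is_mat n (mident n)"
  by (auto simp: is_mat_def mident_def)

lemma is_mat_mtr [simp]: "is_mat n (mtr A) = is_mat n A"
  by (auto simp: is_mat_def mtr_def)

lemma is_mat_madd [simp]: "is_mat n A \<Longrightarrow> is_mat n B \<Longrightarrow> is_mat n (madd A B)"
  by (auto simp: is_mat_def madd_def)

lemma is_mat_mzero [simp]: "is_mat n mzero"
  by (simp add: is_mat_def mzero_def)

lemma mtr_mtr [simp]: "mtr (mtr A) = A"
  by (simp add: mtr_def)

lemma mtr_mident [simp]: "mtr (mident n) = mident n"
  by (auto simp: mtr_def mident_def intro!: ext)

lemma mtr_mmul: "mtr (mmul n A B) = mmul n (mtr B) (mtr A)"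
  by (auto simp: mtr_def mmul_def mult.commute intro!: ext)

lemma mmul_assoc: "mmul n (mmul n A B) C = mmul n A (mmul n B C)"
proof (intro ext)
  fix i j
  show "mmul n (mmul n A B) C i j = mmul n A (mmul n B C) i j"
  proof (cases "i < n \<and> j < n")
    case True
    then have "mmul n (mmul n A B) C i j = (\<Sum>k<n. \<Sum>l<n. A i l * B l k * C k j)"
      by (simp add: mmul_def sum_distrib_right)
    also have "\<dots> = (\<Sum>l<n. \<Sum>k<n. A i l * B l k * C k j)"
      by (rule sum.swap)
    also have "\<dots> = mmul n A (mmul n B C) i j"
      using True by (simp add: mmul_def sum_distrib_left mult.assoc)
    finally show ?thesis .
  qed (auto simp: mmul_def)
qed

lemma mmul_mident_left: "is_mat n A \<Longrightarrow> mmul n (mident n) A = A"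
proof (intro ext)
  fix i j assume A: "is_mat n A"
  show "mmul n (mident n) A i j = A i j"
  proof (cases "i < n \<and> j < n")
    case True
    then have "mmul n (mident n) A i j = (\<Sum>k<n. (if i = k then 1 else 0) * A k j)"
      by (simp add: mmul_def mident_def)
    also have "\<dots> = (\<Sum>k<n. if k = i then A k j else 0)"
      by (rule sum.cong) auto
    also have "\<dots> = A i j"
      using True by simp
    finally show ?thesis .
  qed (use A in \<open>auto simp: mmul_def is_mat_def\<close>)
qed

lemma mmul_mident_right: "is_mat n A \<Longrightarrow> mmul n A (mident n) = A"
proof (intro ext)
  fix i j assume A: "is_mat n A"
  show "mmul n A (mident n) i j = A i j"
  proof (cases "i < n \<and> j < n")
    case True
    then have "mmul n A (mident n) i j = (\<Sum>k<n. A i k * (if k = j then 1 else 0))"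
      by (simp add: mmul_def mident_def)
    also have "\<dots> = (\<Sum>k<n. if k = j then A i k else 0)"
      by (rule sum.cong) auto
    also have "\<dots> = A i j"
      using True by simp
    finally show ?thesis .
  qed (use A in \<open>auto simp: mmul_def is_mat_def\<close>)
qed

lemma mmul_madd_left: "mmul n (madd A B) C = madd (mmul n A C) (mmul n B C)"
  by (auto simp: mmul_def madd_def sum.distrib algebra_simps intro!: ext)

lemma mmul_madd_right: "mmul n A (madd B C) = madd (mmul n A B) (mmul n A C)"
  by (auto simp: mmul_def madd_def sum.distrib algebra_simps intro!: ext)

lemma mmul_mzero_left [simp]: "mmul n mzero A = mzero"
  by (auto simp: mmul_def mzero_def intro!: ext)

lemma mmul_mzero_right [simp]: "mmul n A mzero = mzero"
  by (auto simp: mmul_def mzero_def intro!: ext)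

lemma madd_mzero [simp]: "madd A mzero = A" "madd mzero A = A"
  by (auto simp: madd_def mzero_def intro!: ext)

lemma skew_apply:
  assumes "skew n X"
  shows "X i j = - X j i"
proof -
  have "mtr X j i = mscale (-1) X j i"
    using assms by (simp add: skew_def)
  then show ?thesis
    by (simp add: mtr_def mscale_def)
qed

lemma skewI:
  assumes "is_mat n X" and "\<And>i j. X i j = - X j i"
  shows "skew n X"
proof -
  have "mtr X i j = mscale (-1) X i j" for i j
    using assms(2)[of j i] by (simp add: mtr_def mscale_def)
  then show ?thesis
    using assms(1) by (auto simp: skew_def)
qed

lemma mmul_skew_swap:
  assumes "skew n X" "skew n L"
  shows "mmul n X L j i = mmul n L X i j"
proof -
  have "X j l * L l i = L i l * X l j" for l
    using skew_apply[OF assms(1), of j l] skew_apply[OF assms(2), of l i] by simp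
  then show ?thesis by (simp add: mmul_def)
qed

lemma skew_comm:
  assumes "skew n X" "skew n L"
  shows "skew n (comm n X L)"
proof (rule skewI)
  show "is_mat n (comm n X L)"
    by (simp add: is_mat_def comm_def mdiff_def mmul_def)
  show "comm n X L i j = - comm n X L j i" for i j
    using mmul_skew_swap[OF assms, of i j] mmul_skew_swap[OF assms(2,1), of i j]
    by (simp add: comm_def mdiff_def)
qed

lemma orth_is_mat: "orth n U \<Longrightarrow> is_mat n U"
  by (simp add: orth_def)

lemma orth_mmul_mtr:
  assumes "orth n V"
  shows "mmul n V (mtr V) = mident n"
proof -
  let ?A = "Matrix.mat n n (\<lambda>(i,j). V j i)"
  let ?B = "Matrix.mat n n (\<lambda>(i,j). V i j)"
  have AB: "?A * ?B = 1\<^sub>m n"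
  proof (rule eq_matI)
    fix i j assume ij: "i < dim_row (1\<^sub>m n)" "j < dim_col (1\<^sub>m n)"
    have "mmul n (mtr V) V i j = mident n i j"
      using assms unfolding orth_def by simp
    then have "(\<Sum>k<n. V k i * V k j) = (if i = j then 1 else 0)"
      using ij by (simp add: mmul_def mtr_def mident_def)
    then show "(?A * ?B) $$ (i, j) = 1\<^sub>m n $$ (i, j)"
      using ij by (simp add: scalar_prod_def atLeast0LessThan)
  qed auto
  have BA: "?B * ?A = 1\<^sub>m n"
    by (rule mat_mult_left_right_inverse[OF _ _ AB]) auto
  show ?thesis
  proof (intro ext)
    fix i j
    show "mmul n V (mtr V) i j = mident n i j"
    proof (cases "i < n \<and> j < n")
      case True
      have "(?B * ?A) $$ (i, j) = 1\<^sub>m n $$ (i, j)"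
        using BA by simp
      then show ?thesis
        using True by (simp add: scalar_prod_def atLeast0LessThan mmul_def mtr_def mident_def)
    qed (auto simp: mmul_def mident_def)
  qed
qed

lemma orth_mtr: "orth n V \<Longrightarrow> orth n (mtr V)"
  by (simp add: orth_def orth_mmul_mtr)

lemma orth_mtr_mmul_cancel: "orth n U \<Longrightarrow> is_mat n Z \<Longrightarrow> mmul n (mtr U) (mmul n U Z) = Z"
  by (simp add: mmul_assoc[symmetric] orth_def mmul_mident_left)

lemma orth_mmul_mtr_cancel: "orth n U \<Longrightarrow> is_mat n Z \<Longrightarrow> mmul n U (mmul n (mtr U) Z) = Z"
  using orth_mtr_mmul_cancel[OF orth_mtr] by simp

lemma orth_mmul: "orth n U \<Longrightarrow> orth n W \<Longrightarrow> orth n (mmul n U W)"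
  by (simp add: orth_def mtr_mmul mmul_assoc orth_mtr_mmul_cancel)

definition mconj :: "nat \<Rightarrow> rmat \<Rightarrow> rmat \<Rightarrow> rmat" where
  "mconj n V A = mmul n (mmul n V A) (mtr V)"

lemma conj_tup_mconj: "conj_tup n d V M = tup d (\<lambda>k. mconj n V (M k))"
  by (simp add: conj_tup_def mconj_def)

lemma is_mat_mconj [simp]: "is_mat n (mconj n V A)"
  by (simp add: mconj_def)

lemma mconj_mzero [simp]: "mconj n V mzero = mzero"
  by (simp add: mconj_def)

lemma mconj_madd: "mconj n V (madd A B) = madd (mconj n V A) (mconj n V B)"
  by (simp add: mconj_def mmul_madd_left mmul_madd_right)

lemma mconj_mconj: "mconj n V (mconj n W A) = mconj n (mmul n V W) A"
  by (simp add: mconj_def mtr_mmul mmul_assoc)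

lemma orth_mconj_mmul: "orth n V \<Longrightarrow> mconj n V (mmul n A B) = mmul n (mconj n V A) (mconj n V B)"
  by (simp add: mconj_def mmul_assoc orth_mtr_mmul_cancel)

lemma orth_mconj_mident: "orth n V \<Longrightarrow> mconj n V (mident n) = mident n"
  by (simp add: mconj_def mmul_mident_right orth_is_mat orth_mmul_mtr)

lemma orth_mconj_cancel: "orth n V \<Longrightarrow> is_mat n A \<Longrightarrow> mconj n (mtr V) (mconj n V A) = A"
  unfolding mconj_mconj by (simp add: orth_def mconj_def mmul_mident_left mmul_mident_right)

lemma mconj_apply:
  assumes "i < n" "j < n"
  shows "mconj n V A i j = (\<Sum>k<n. \<Sum>l<n. V i k * A k l * V j l)"
proof -
  have "mconj n V A i j = (\<Sum>l<n. \<Sum>k<n. V i k * A k l * V j l)"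
    using assms by (simp add: mconj_def mmul_def mtr_def sum_distrib_right)
  also have "\<dots> = (\<Sum>k<n. \<Sum>l<n. V i k * A k l * V j l)"
    by (rule sum.swap)
  finally show ?thesis .
qed

definition frob :: "nat \<Rightarrow> rmat \<Rightarrow> rmat \<Rightarrow> real" where
  "frob n A B = (\<Sum>i<n. \<Sum>j<n. A i j * B i j)"

lemma frob_mconj: "frob n (mconj n V A) B = frob n A (mconj n (mtr V) B)"
proof -
  have "frob n (mconj n V A) B = (\<Sum>i<n. \<Sum>j<n. \<Sum>k<n. \<Sum>l<n. V i k * A k l * V j l * B i j)"
    by (simp add: frob_def mconj_apply sum_distrib_right)
  also have "\<dots> = (\<Sum>i<n. \<Sum>k<n. \<Sum>j<n. \<Sum>l<n. V i k * A k l * V j l * B i j)"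
    by (intro sum.cong refl sum.swap)
  also have "\<dots> = (\<Sum>k<n. \<Sum>i<n. \<Sum>j<n. \<Sum>l<n. V i k * A k l * V j l * B i j)"
    by (rule sum.swap)
  also have "\<dots> = (\<Sum>k<n. \<Sum>i<n. \<Sum>l<n. \<Sum>j<n. V i k * A k l * V j l * B i j)"
    by (intro sum.cong refl sum.swap)
  also have "\<dots> = (\<Sum>k<n. \<Sum>l<n. \<Sum>i<n. \<Sum>j<n. V i k * A k l * V j l * B i j)"
    by (intro sum.cong refl sum.swap)
  also have "\<dots> = frob n A (mconj n (mtr V) B)"
    by (simp add: frob_def mconj_apply mtr_def sum_distrib_left mult_ac)
  finally show ?thesis .
qed

lemma tinner_tup_mconj:
  "tinner n d (tup d (\<lambda>k. mconj n V (A k))) u = (\<Sum>k\<in>{1..d+1}. frob n (A k) (mconj n (mtr V) (u k)))"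
  by (simp add: tinner_def tup_def frob_def[symmetric] frob_mconj)

section \<open>Derivatives of matrix curves\<close>

lemma mat_deriv_unique: "mat_deriv A A1 t \<Longrightarrow> mat_deriv A A2 t \<Longrightarrow> A1 = A2"
  unfolding mat_deriv_def by (auto intro!: ext DERIV_unique)

lemma mat_deriv_const: "mat_deriv (\<lambda>s. C) mzero t"
  by (simp add: mat_deriv_def mzero_def)

lemma mat_deriv_mtr: "mat_deriv A A' t \<Longrightarrow> mat_deriv (\<lambda>s. mtr (A s)) (mtr A') t"
  by (simp add: mat_deriv_def mtr_def)

lemma mat_deriv_mdiff:
  "mat_deriv A A' t \<Longrightarrow> mat_deriv B B' t \<Longrightarrow> mat_deriv (\<lambda>s. mdiff (A s) (B s)) (mdiff A' B') t"
  unfolding mat_deriv_def mdiff_def by (auto intro!: derivative_eq_intros)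

lemma mat_deriv_mmul:
  assumes "mat_deriv A A' t" "mat_deriv B B' t"
  shows "mat_deriv (\<lambda>s. mmul n (A s) (B s)) (madd (mmul n A' (B t)) (mmul n (A t) B')) t"
  unfolding mat_deriv_def
proof (intro allI)
  fix i j
  show "((\<lambda>s. mmul n (A s) (B s) i j) has_real_derivative
      madd (mmul n A' (B t)) (mmul n (A t) B') i j) (at t)"
  proof (cases "i < n \<and> j < n")
    case True
    have "((\<lambda>s. \<Sum>k<n. A s i k * B s k j) has_real_derivative
        (\<Sum>k<n. A' i k * B t k j + A t i k * B' k j)) (at t)"
      using assms unfolding mat_deriv_def by (intro DERIV_sum) (auto intro!: derivative_eq_intros)
    then show ?thesis
      using True by (simp add: mmul_def madd_def sum.distrib)
  qed (auto simp: mmul_def madd_def)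
qed

lemma mat_deriv_comm:
  assumes "mat_deriv X X1 t"
  shows "mat_deriv (\<lambda>s. comm n (X s) K) (comm n X1 K) t"
proof -
  have "mat_deriv (\<lambda>s. comm n (X s) K)
      (mdiff (madd (mmul n X1 K) (mmul n (X t) mzero)) (madd (mmul n mzero (X t)) (mmul n K X1))) t"
    unfolding comm_def by (intro mat_deriv_mdiff mat_deriv_mmul assms mat_deriv_const)
  then show ?thesis
    by (simp add: comm_def)
qed

lemma mat_deriv_const_apply:
  assumes "mat_deriv A A' t" "\<And>s. A s i j = c"
  shows "A' i j = 0"
proof -
  have "((\<lambda>s. A s i j) has_real_derivative A' i j) (at t)"
    using assms(1) by (simp add: mat_deriv_def)
  moreover have "((\<lambda>s. A s i j) has_real_derivative 0) (at t)"
    using assms(2) by simp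
  ultimately show ?thesis
    by (rule DERIV_unique)
qed

lemma mat_deriv_is_mat: "mat_deriv A A' t \<Longrightarrow> (\<And>s. is_mat n (A s)) \<Longrightarrow> is_mat n A'"
  unfolding is_mat_def by (metis mat_deriv_const_apply)

lemma mat_deriv_diag_blocks_zero:
  "mat_deriv A A' t \<Longrightarrow> (\<And>s. diag_blocks_zero n d nk (A s)) \<Longrightarrow> diag_blocks_zero n d nk A'"
  unfolding diag_blocks_zero_def by (metis mat_deriv_const_apply)

lemma mat_deriv_skew:
  assumes A': "mat_deriv A A' t" and A: "\<And>s. skew n (A s)"
  shows "skew n A'"
proof (rule skewI)
  show "is_mat n A'"
    using A' by (rule mat_deriv_is_mat) (use A in \<open>simp add: skew_def\<close>)
  fix i j
  have "((\<lambda>s. A s i j) has_real_derivative A' i j) (at t)"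
    using A' by (simp add: mat_deriv_def)
  moreover have "((\<lambda>s. A s i j) has_real_derivative - A' j i) (at t)"
  proof -
    have "((\<lambda>s. - A s j i) has_real_derivative - A' j i) (at t)"
      using A' by (auto simp: mat_deriv_def intro!: derivative_eq_intros)
    moreover have "(\<lambda>s. - A s j i) = (\<lambda>s. A s i j)"
      by (rule ext) (simp add: skew_apply[OF A, of _ i j])
    ultimately show ?thesis
      by simp
  qed
  ultimately show "A' i j = - A' j i"
    by (rule DERIV_unique)
qed

lemma orth_deriv_skew:
  assumes V: "\<And>s. orth n (V s)" and V1: "mat_deriv V V1 t"
  shows "skew n (mmul n (mtr (V t)) V1)"
proof (rule skewI)
  let ?L = "mmul n (mtr (V t)) V1"
  have "mat_deriv (\<lambda>s. mmul n (mtr (V s)) (V s)) (madd (mmul n (mtr V1) (V t)) ?L) t"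
    by (intro mat_deriv_mmul mat_deriv_mtr V1)
  moreover have "(\<lambda>s. mmul n (mtr (V s)) (V s)) = (\<lambda>s. mident n)"
    using V by (simp add: orth_def)
  ultimately have "madd (mmul n (mtr V1) (V t)) ?L = mzero"
    using mat_deriv_unique mat_deriv_const by metis
  then have "madd (mtr ?L) ?L i j = 0" for i j
    by (simp add: mtr_mmul mzero_def)
  then have "?L j i + ?L i j = 0" for i j
    by (simp add: madd_def mtr_def)
  then show "?L i j = - ?L j i" for i j
    by (metis add.commute eq_neg_iff_add_eq_0)
qed simp

lemma tup_deriv_unique: "tup_deriv G A t \<Longrightarrow> tup_deriv G B t \<Longrightarrow> A = B"
  unfolding tup_deriv_def by (auto intro!: ext DERIV_unique)

lemma tup_deriv_tup:
  assumes "\<And>k. k \<in> {1..d+1} \<Longrightarrow> mat_deriv (\<lambda>s. F s k) (F' k) t"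
  shows "tup_deriv (\<lambda>s. tup d (F s)) (tup d F') t"
  unfolding tup_deriv_def
proof (intro allI)
  fix k i j
  show "((\<lambda>s. tup d (F s) k i j) has_real_derivative tup d F' k i j) (at t)"
    using assms[of k] by (cases "k \<in> {1..d+1}") (auto simp: tup_def mat_deriv_def mzero_def)
qed

text \<open>With \<open>V' = V \<Lambda>\<close>, the derivative of \<open>V C V\<^sup>T\<close> is \<open>V (\<Lambda> C + C' + C \<Lambda>\<^sup>T) V\<^sup>T\<close>.\<close>

definition conj_deriv :: "nat \<Rightarrow> rmat \<Rightarrow> rmat \<Rightarrow> rmat \<Rightarrow> rmat" where
  "conj_deriv n L C C' = madd (madd (mmul n L C) C') (mmul n C (mtr L))"

lemma is_mat_conj_deriv [simp]: "is_mat n C' \<Longrightarrow> is_mat n (conj_deriv n L C C')"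
  by (simp add: conj_deriv_def)

lemma mat_deriv_mconj:
  assumes V: "orth n (V t)" "mat_deriv V V1 t" "is_mat n V1" and C: "mat_deriv C C1 t"
  shows "mat_deriv (\<lambda>s. mconj n (V s) (C s))
           (mconj n (V t) (conj_deriv n (mmul n (mtr (V t)) V1) (C t) C1)) t"
proof -
  define L where "L = mmul n (mtr (V t)) V1"
  have V1_eq: "V1 = mmul n (V t) L"
    using orth_mmul_mtr_cancel[OF V(1,3)] by (simp add: L_def)
  have "mat_deriv (\<lambda>s. mconj n (V s) (C s))
      (madd (mmul n (madd (mmul n V1 (C t)) (mmul n (V t) C1)) (mtr (V t)))
        (mmul n (mmul n (V t) (C t)) (mtr V1))) t"
    unfolding mconj_def by (intro mat_deriv_mmul mat_deriv_mtr V(2) C)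
  also have "madd (mmul n (madd (mmul n V1 (C t)) (mmul n (V t) C1)) (mtr (V t)))
        (mmul n (mmul n (V t) (C t)) (mtr V1)) = mconj n (V t) (conj_deriv n L (C t) C1)"
    unfolding V1_eq
    by (simp add: mconj_def conj_deriv_def mmul_madd_left mmul_madd_right mmul_assoc mtr_mmul)
  finally show ?thesis
    by (simp add: L_def)
qed

section \<open>Block signs\<close>

definition blk_sign :: "nat \<Rightarrow> nat \<Rightarrow> (nat \<Rightarrow> nat) \<Rightarrow> nat \<Rightarrow> nat \<Rightarrow> real" where
  "blk_sign n d nk k i = (if blk n d nk i = k then 1 else -1)"

lemma blk_bounds:
  assumes "i < n"
  shows "blk n d nk i \<in> {1..d+1}"
proof -
  have ex: "i < bnd n d nk (d+1)"
    using assms by (simp add: bnd_def)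
  have "blk n d nk i \<le> d + 1"
    unfolding blk_def by (rule Least_le) (rule ex)
  moreover have "i < bnd n d nk (blk n d nk i)"
    unfolding blk_def by (rule LeastI) (rule ex)
  then have "blk n d nk i \<noteq> 0"
    by (auto simp: bnd_def split: if_splits)
  ultimately show ?thesis
    by auto
qed

lemma diag_blocks_zero_apply:
  "diag_blocks_zero n d nk M \<Longrightarrow> i < n \<Longrightarrow> j < n \<Longrightarrow> blk n d nk i = blk n d nk j \<Longrightarrow> M i j = 0"
  by (simp add: diag_blocks_zero_def)

lemma Jmat_apply:
  "Jmat n d nk k i j = (if i < n \<and> j < n \<and> i = j then blk_sign n d nk k i else 0)"
  by (simp add: Jmat_def blk_sign_def)

lemma is_mat_Jmat [simp]: "is_mat n (Jmat n d nk k)"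
  by (auto simp: is_mat_def Jmat_def)

lemma mmul_Jmat_right:
  "mmul n A (Jmat n d nk k) i j = (if i < n \<and> j < n then A i j * blk_sign n d nk k j else 0)"
proof (cases "i < n \<and> j < n")
  case True
  then have "mmul n A (Jmat n d nk k) i j = (\<Sum>l<n. A i l * (if l = j then blk_sign n d nk k l else 0))"
    by (simp add: mmul_def Jmat_apply)
  also have "\<dots> = (\<Sum>l<n. if l = j then A i l * blk_sign n d nk k j else 0)"
    by (rule sum.cong) auto
  also have "\<dots> = A i j * blk_sign n d nk k j"
    using True by simp
  finally show ?thesis
    using True by simp
qed (auto simp: mmul_def)

lemma mmul_Jmat_left:
  "mmul n (Jmat n d nk k) A i j = (if i < n \<and> j < n then blk_sign n d nk k i * A i j else 0)"
proof (cases "i < n \<and> j < n")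
  case True
  then have "mmul n (Jmat n d nk k) A i j = (\<Sum>l<n. (if i = l then blk_sign n d nk k i else 0) * A l j)"
    by (simp add: mmul_def Jmat_apply)
  also have "\<dots> = (\<Sum>l<n. if l = i then blk_sign n d nk k i * A l j else 0)"
    by (rule sum.cong) auto
  also have "\<dots> = blk_sign n d nk k i * A i j"
    using True by simp
  finally show ?thesis
    using True by simp
qed (auto simp: mmul_def)

lemma comm_Jmat_apply:
  "comm n X (Jmat n d nk k) i j =
     (if i < n \<and> j < n then X i j * (blk_sign n d nk k j - blk_sign n d nk k i) else 0)"
  by (simp add: comm_def mdiff_def mmul_Jmat_right mmul_Jmat_left algebra_simps)

lemma Jmat_square: "mmul n (Jmat n d nk k) (Jmat n d nk k) = mident n"
  by (auto simp: mmul_Jmat_left Jmat_apply mident_def blk_sign_def intro!: ext)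

lemma sum_blk_sign:
  assumes "l < n"
  shows "(\<Sum>k\<in>{1..d+1}. blk_sign n d nk k l) = 1 - real d"
proof -
  have "(\<Sum>k\<in>{1..d+1}. blk_sign n d nk k l) = (\<Sum>k\<in>{1..d+1}. 2 * (if k = blk n d nk l then 1 else 0) - 1)"
    by (intro sum.cong) (auto simp: blk_sign_def)
  also have "\<dots> = 2 - real (d + 1)"
    using blk_bounds[OF assms, of d nk] by (simp add: sum_subtractf sum.delta' sum_distrib_left[symmetric])
  finally show ?thesis
    by simp
qed

section \<open>Tangent vectors of the flag manifold\<close>

lemma orth_mconj_Jmat_square:
  "orth n U \<Longrightarrow> mmul n (mconj n U (Jmat n d nk k)) (mconj n U (Jmat n d nk k)) = mident n"
  by (simp add: orth_mconj_mmul[symmetric] Jmat_square orth_mconj_mident)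

lemma mconj_Jmat_apply:
  assumes "i < n" "j < n"
  shows "mconj n U (Jmat n d nk k) i j = (\<Sum>l<n. U i l * blk_sign n d nk k l * U j l)"
proof -
  have "mconj n U (Jmat n d nk k) i j = (\<Sum>l<n. mmul n U (Jmat n d nk k) i l * mtr U l j)"
    unfolding mconj_def by (rule mmul_apply[OF assms])
  also have "\<dots> = (\<Sum>l<n. U i l * blk_sign n d nk k l * U j l)"
    by (rule sum.cong) (use assms in \<open>simp_all add: mmul_Jmat_right mtr_def\<close>)
  finally show ?thesis .
qed

lemma sum_mconj_Jmat:
  assumes U: "orth n U" and i: "i < n" and j: "j < n"
  shows "(\<Sum>k\<in>{1..d+1}. mconj n U (Jmat n d nk k) i j) = (1 - real d) * mident n i j"
proof -
  have "(\<Sum>k\<in>{1..d+1}. mconj n U (Jmat n d nk k) i j)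
      = (\<Sum>k\<in>{1..d+1}. \<Sum>l<n. U i l * blk_sign n d nk k l * U j l)"
    by (intro sum.cong refl mconj_Jmat_apply i j)
  also have "\<dots> = (\<Sum>l<n. \<Sum>k\<in>{1..d+1}. U i l * blk_sign n d nk k l * U j l)"
    by (rule sum.swap)
  also have "\<dots> = (\<Sum>l<n. U i l * U j l * (\<Sum>k\<in>{1..d+1}. blk_sign n d nk k l))"
    by (simp add: sum_distrib_left mult_ac del: sum.cl_ivl_Suc)
  also have "\<dots> = (\<Sum>l<n. U i l * U j l * (1 - real d))"
    by (intro sum.cong refl) (simp only: sum_blk_sign lessThan_iff)
  also have "\<dots> = (1 - real d) * mmul n U (mtr U) i j"
    using i j by (simp add: mmul_def mtr_def sum_distrib_left mult_ac)
  finally show ?thesis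
    using orth_mmul_mtr[OF U] by simp
qed

lemma tangent_curveE:
  assumes "u \<in> tangent n d nk p"
  obtains U where "\<And>s. orth n (U s)" "p = conj_tup n d (U 0) (Jmat n d nk)"
    "\<And>k. k \<in> {1..d+1} \<Longrightarrow> mat_deriv (\<lambda>s. mconj n (U s) (Jmat n d nk k)) (u k) 0"
proof -
  obtain G where G: "\<And>s. G s \<in> Flag n d nk" "G 0 = p" "tup_deriv G u 0"
    using assms unfolding tangent_def by blast
  have "\<forall>s. \<exists>U. orth n U \<and> G s = conj_tup n d U (Jmat n d nk)"
    using G(1) unfolding Flag_def by blast
  then obtain U where U: "\<And>s. orth n (U s)" "\<And>s. G s = conj_tup n d (U s) (Jmat n d nk)"
    by metis
  have "mat_deriv (\<lambda>s. mconj n (U s) (Jmat n d nk k)) (u k) 0" if k: "k \<in> {1..d+1}" for k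
  proof -
    have "mconj n (U s) (Jmat n d nk k) = G s k" for s
      using k by (simp add: U(2) conj_tup_mconj tup_def)
    then show ?thesis
      using G(3) by (simp add: tup_deriv_def mat_deriv_def)
  qed
  with U G(2) that show ?thesis
    by metis
qed

lemma tangent_pullback_anticomm:
  assumes V0: "orth n V0" and u: "u \<in> tangent n d nk (conj_tup n d V0 (Jmat n d nk))"
    and k: "k \<in> {1..d+1}" and a: "a < n" and b: "b < n"
  shows "mconj n (mtr V0) (u k) a b * (blk_sign n d nk k a + blk_sign n d nk k b) = 0"
proof -
  let ?J = "Jmat n d nk k"
  let ?W = "mconj n (mtr V0) (u k)"
  obtain U where U: "\<And>s. orth n (U s)" "conj_tup n d V0 (Jmat n d nk) = conj_tup n d (U 0) (Jmat n d nk)"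
      "mat_deriv (\<lambda>s. mconj n (U s) ?J) (u k) 0"
    using tangent_curveE[OF u] k by metis
  define P where "P = mconj n V0 ?J"
  have P: "P = mconj n (U 0) ?J"
    using fun_cong[OF U(2), of k] k by (simp add: P_def conj_tup_mconj tup_def)
  have "mat_deriv (\<lambda>s. mmul n (mconj n (U s) ?J) (mconj n (U s) ?J))
      (madd (mmul n (u k) P) (mmul n P (u k))) 0"
    unfolding P by (intro mat_deriv_mmul U(3))
  moreover have "(\<lambda>s. mmul n (mconj n (U s) ?J) (mconj n (U s) ?J)) = (\<lambda>s. mident n)"
    using U(1) by (simp add: orth_mconj_Jmat_square)
  ultimately have "madd (mmul n (u k) P) (mmul n P (u k)) = mzero"
    using mat_deriv_unique mat_deriv_const by metis
  moreover have "mconj n (mtr V0) P = ?J"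
    using V0 by (simp add: P_def orth_mconj_cancel)
  ultimately have "madd (mmul n ?W ?J) (mmul n ?J ?W) = mzero"
    using orth_mtr[OF V0] by (metis mconj_madd orth_mconj_mmul mconj_mzero)
  then have "madd (mmul n ?W ?J) (mmul n ?J ?W) a b = 0"
    by (simp add: mzero_def)
  then show ?thesis
    using a b by (simp add: madd_def mmul_Jmat_left mmul_Jmat_right algebra_simps)
qed

lemma tangent_pullback_sum:
  assumes V0: "orth n V0" and u: "u \<in> tangent n d nk (conj_tup n d V0 (Jmat n d nk))"
    and a: "a < n" and b: "b < n"
  shows "(\<Sum>k\<in>{1..d+1}. mconj n (mtr V0) (u k) a b) = 0"
proof -
  obtain U where U: "\<And>s. orth n (U s)"
      "\<And>k. k \<in> {1..d+1} \<Longrightarrow> mat_deriv (\<lambda>s. mconj n (U s) (Jmat n d nk k)) (u k) 0"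
    using tangent_curveE[OF u] by metis
  have u_sum: "(\<Sum>k\<in>{1..d+1}. u k i j) = 0" if ij: "i < n" "j < n" for i j
  proof -
    have "((\<lambda>s. \<Sum>k\<in>{1..d+1}. mconj n (U s) (Jmat n d nk k) i j) has_real_derivative
        (\<Sum>k\<in>{1..d+1}. u k i j)) (at 0)"
      using U(2) unfolding mat_deriv_def by (intro DERIV_sum) auto
    moreover have "(\<lambda>s. \<Sum>k\<in>{1..d+1}. mconj n (U s) (Jmat n d nk k) i j)
        = (\<lambda>s. (1 - real d) * mident n i j)"
      using sum_mconj_Jmat[OF U(1) ij] by simp
    ultimately show ?thesis
      using DERIV_const DERIV_unique by metis
  qed
  have "(\<Sum>k\<in>{1..d+1}. mconj n (mtr V0) (u k) a b)
      = (\<Sum>k\<in>{1..d+1}. \<Sum>l<n. \<Sum>m<n. V0 l a * u k l m * V0 m b)"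
    using a b by (simp add: mconj_apply mtr_def del: sum.cl_ivl_Suc)
  also have "\<dots> = (\<Sum>l<n. \<Sum>k\<in>{1..d+1}. \<Sum>m<n. V0 l a * u k l m * V0 m b)"
    by (rule sum.swap)
  also have "\<dots> = (\<Sum>l<n. \<Sum>m<n. \<Sum>k\<in>{1..d+1}. V0 l a * u k l m * V0 m b)"
    by (intro sum.cong refl sum.swap)
  also have "\<dots> = (\<Sum>l<n. \<Sum>m<n. V0 l a * (\<Sum>k\<in>{1..d+1}. u k l m) * V0 m b)"
    by (simp add: sum_distrib_left sum_distrib_right del: sum.cl_ivl_Suc)
  also have "\<dots> = 0"
    by (intro sum.neutral ballI) (simp only: u_sum lessThan_iff mult_zero_left mult_zero_right)
  finally show ?thesis .
qed

definition elem_skew :: "nat \<Rightarrow> nat \<Rightarrow> rmat" where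
  "elem_skew a b = (\<lambda>i j. if i = a \<and> j = b then 1 else if i = b \<and> j = a then -1 else 0)"

definition givens :: "nat \<Rightarrow> nat \<Rightarrow> nat \<Rightarrow> real \<Rightarrow> rmat" where
  "givens n a b s = (\<lambda>i j. (if i = j \<and> (i = a \<or> i = b) then 1 else 0) * cos s + elem_skew a b i j * sin s
      + (if i = j \<and> i < n \<and> i \<noteq> a \<and> i \<noteq> b then 1 else 0))"

lemma is_mat_elem_skew: "a < n \<Longrightarrow> b < n \<Longrightarrow> is_mat n (elem_skew a b)"
  by (auto simp: is_mat_def elem_skew_def)

lemma givens_0: "a < n \<Longrightarrow> b < n \<Longrightarrow> givens n a b 0 = mident n"
  by (auto simp: givens_def mident_def elem_skew_def intro!: ext)

lemma mat_deriv_givens: "mat_deriv (givens n a b) (elem_skew a b) 0"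
  unfolding mat_deriv_def givens_def by (auto intro!: derivative_eq_intros)

lemma orth_givens:
  assumes a: "a < n" and b: "b < n" and ab: "a \<noteq> b"
  shows "orth n (givens n a b s)"
  unfolding orth_def
proof (intro conjI ext)
  let ?R = "givens n a b s"
  show "is_mat n ?R"
    using a b by (auto simp: givens_def is_mat_def elem_skew_def)
  fix i j
  show "mmul n (mtr ?R) ?R i j = mident n i j"
  proof (cases "i < n \<and> j < n")
    case True
    then have ij: "i < n" "j < n" by auto
    show ?thesis
    proof (cases "i = a \<or> i = b")
      case False
      have "mmul n (mtr ?R) ?R i j = (\<Sum>l<n. if l = i then ?R l j else 0)"
        unfolding mmul_apply[OF ij]
        by (rule sum.cong) (use ij False in \<open>auto simp: mtr_def givens_def elem_skew_def\<close>)
      then show ?thesis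
        using False ij by (auto simp: givens_def elem_skew_def mident_def)
    next
      case True
      have "mmul n (mtr ?R) ?R i j = ?R a i * ?R a j + ?R b i * ?R b j"
        unfolding mmul_apply[OF ij] mtr_def
        by (rule sum_two_terms) (use ij True a b ab in \<open>auto simp: givens_def elem_skew_def\<close>)
      then show ?thesis
        using True ij a b ab
        by (auto simp: givens_def elem_skew_def mident_def algebra_simps sin_cos_squared_add3)
    qed
  qed (auto simp: mmul_def mident_def)
qed

lemma givens_tangent:
  assumes V0: "orth n V0" and a: "a < n" and b: "b < n" and ab: "a \<noteq> b"
  shows "tup d (\<lambda>k. mconj n V0 (conj_deriv n (elem_skew a b) (Jmat n d nk k) mzero))
           \<in> tangent n d nk (conj_tup n d V0 (Jmat n d nk))"
proof -
  define U where "U s = mmul n V0 (givens n a b s)" for s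
  have U: "orth n (U s)" for s
    unfolding U_def by (intro orth_mmul V0 orth_givens a b ab)
  have U0: "U 0 = V0"
    using a b V0 by (simp add: U_def givens_0 mmul_mident_right orth_is_mat)
  have "mat_deriv U (madd (mmul n mzero (givens n a b 0)) (mmul n V0 (elem_skew a b))) 0"
    unfolding U_def by (intro mat_deriv_mmul mat_deriv_const mat_deriv_givens)
  then have dU: "mat_deriv U (mmul n V0 (elem_skew a b)) 0"
    by simp
  have "mat_deriv (\<lambda>s. mconj n (U s) (Jmat n d nk k))
      (mconj n (U 0) (conj_deriv n (mmul n (mtr (U 0)) (mmul n V0 (elem_skew a b))) (Jmat n d nk k) mzero)) 0"
    for k
    by (intro mat_deriv_mconj U dU mat_deriv_const is_mat_mmul)
  moreover have "mmul n (mtr (U 0)) (mmul n V0 (elem_skew a b)) = elem_skew a b"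
    using U0 V0 a b by (simp add: orth_mtr_mmul_cancel is_mat_elem_skew)
  ultimately have "mat_deriv (\<lambda>s. mconj n (U s) (Jmat n d nk k))
      (mconj n V0 (conj_deriv n (elem_skew a b) (Jmat n d nk k) mzero)) 0" for k
    using U0 by simp
  then show ?thesis
    unfolding tangent_def using U U0
    by (auto intro!: exI[of _ "\<lambda>s. conj_tup n d (U s) (Jmat n d nk)"] tup_deriv_tup
        simp: conj_tup_mconj Flag_def)
qed

section \<open>Orthogonality to the tangent space\<close>

lemma sum_mult_eq_0_if_blocks_agree:
  fixes A W :: "nat \<Rightarrow> real"
  assumes a: "a < n" and b: "b < n"
    and W_sign: "\<And>k. k \<in> {1..d+1} \<Longrightarrow> W k * (blk_sign n d nk k a + blk_sign n d nk k b) = 0"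
    and W_sum: "(\<Sum>k\<in>{1..d+1}. W k) = 0"
    and A_agree: "blk n d nk a \<noteq> blk n d nk b \<Longrightarrow> A (blk n d nk a) = A (blk n d nk b)"
  shows "(\<Sum>k\<in>{1..d+1}. A k * W k) = 0"
proof -
  let ?p = "blk n d nk a" and ?q = "blk n d nk b"
  have pq: "?p \<in> {1..d+1}" "?q \<in> {1..d+1}"
    using blk_bounds a b by auto
  have W0: "W k = 0" if "k \<in> {1..d+1}" "?p = ?q \<or> k \<notin> {?p, ?q}" for k
  proof -
    have "blk_sign n d nk k a + blk_sign n d nk k b \<noteq> 0"
      using that(2) by (auto simp: blk_sign_def)
    then show ?thesis
      using W_sign[OF that(1)] by simp
  qed
  show ?thesis
  proof (cases "?p = ?q")
    case True
    then show ?thesis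
      by (simp add: W0)
  next
    case False
    have "(\<Sum>k\<in>{1..d+1}. A k * W k) = (\<Sum>k\<in>{?p, ?q}. A k * W k)"
      using pq W0 by (intro sum.mono_neutral_right) auto
    also have "\<dots> = A ?p * (\<Sum>k\<in>{?p, ?q}. W k)"
      using False A_agree by (simp add: distrib_left)
    also have "(\<Sum>k\<in>{?p, ?q}. W k) = (\<Sum>k\<in>{1..d+1}. W k)"
      using pq W0 by (intro sum.mono_neutral_left) auto
    finally show ?thesis
      using W_sum by simp
  qed
qed

lemma sum_frob_eq_0_if_blocks_agree:
  assumes W_sign: "\<And>k a b. k \<in> {1..d+1} \<Longrightarrow> a < n \<Longrightarrow> b < n \<Longrightarrow>
      W k a b * (blk_sign n d nk k a + blk_sign n d nk k b) = 0"
    and W_sum: "\<And>a b. a < n \<Longrightarrow> b < n \<Longrightarrow> (\<Sum>k\<in>{1..d+1}. W k a b) = 0"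
    and A_agree: "\<And>a b. a < n \<Longrightarrow> b < n \<Longrightarrow> blk n d nk a \<noteq> blk n d nk b \<Longrightarrow>
      A (blk n d nk a) a b = A (blk n d nk b) a b"
  shows "(\<Sum>k\<in>{1..d+1}. frob n (A k) (W k)) = 0"
proof -
  have entry: "(\<Sum>k\<in>{1..d+1}. A k a b * W k a b) = 0" if ab: "a < n" "b < n" for a b
  proof (rule sum_mult_eq_0_if_blocks_agree[OF ab])
    show "W k a b * (blk_sign n d nk k a + blk_sign n d nk k b) = 0" if "k \<in> {1..d+1}" for k
      using W_sign that ab by blast
    show "(\<Sum>k\<in>{1..d+1}. W k a b) = 0"
      using W_sum ab by blast
    show "A (blk n d nk a) a b = A (blk n d nk b) a b" if "blk n d nk a \<noteq> blk n d nk b"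
      using A_agree that ab by blast
  qed
  have "(\<Sum>k\<in>{1..d+1}. frob n (A k) (W k)) = (\<Sum>a<n. \<Sum>k\<in>{1..d+1}. \<Sum>b<n. A k a b * W k a b)"
    unfolding frob_def by (rule sum.swap)
  also have "\<dots> = (\<Sum>a<n. \<Sum>b<n. \<Sum>k\<in>{1..d+1}. A k a b * W k a b)"
    by (intro sum.cong refl sum.swap)
  also have "\<dots> = 0"
    by (intro sum.neutral[OF ballI] entry) auto
  finally show ?thesis .
qed

lemma conj_deriv_elem_skew_apply:
  assumes "a \<noteq> b"
  shows "conj_deriv n (elem_skew a b) (Jmat n d nk k) mzero i j =
    (if i < n \<and> j < n \<and> (i = a \<and> j = b \<or> i = b \<and> j = a)
     then blk_sign n d nk k b - blk_sign n d nk k a else 0)"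
  using assms
  by (auto simp: conj_deriv_def madd_def mzero_def mmul_Jmat_left mmul_Jmat_right elem_skew_def mtr_def)

lemma frob_conj_deriv_elem_skew:
  assumes a: "a < n" and b: "b < n" and ab: "a \<noteq> b"
  shows "frob n A (conj_deriv n (elem_skew a b) (Jmat n d nk k) mzero)
           = (blk_sign n d nk k b - blk_sign n d nk k a) * (A a b + A b a)"
proof -
  let ?c = "blk_sign n d nk k b - blk_sign n d nk k a"
  let ?W = "conj_deriv n (elem_skew a b) (Jmat n d nk k) mzero"
  have row: "(\<Sum>j<n. A i j * ?W i j) = (if i = a then A a b * ?c else if i = b then A b a * ?c else 0)"
    if "i < n" for i
  proof -
    have "(\<Sum>j<n. A i j * ?W i j) = A i a * ?W i a + A i b * ?W i b"
      using a b ab by (intro sum_two_terms) (auto simp: conj_deriv_elem_skew_apply)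
    then show ?thesis
      using a b ab that by (auto simp: conj_deriv_elem_skew_apply)
  qed
  have "frob n A ?W = (\<Sum>i<n. if i = a then A a b * ?c else if i = b then A b a * ?c else 0)"
    unfolding frob_def by (intro sum.cong refl) (simp add: row)
  also have "\<dots> = A a b * ?c + A b a * ?c"
    using a b ab by (subst sum_two_terms) auto
  finally show ?thesis
    by (simp add: algebra_simps)
qed

lemma sum_frob_conj_deriv_elem_skew:
  assumes a: "a < n" and b: "b < n" and ab: "blk n d nk a \<noteq> blk n d nk b"
  shows "(\<Sum>k\<in>{1..d+1}. frob n (A k) (conj_deriv n (elem_skew a b) (Jmat n d nk k) mzero)) =
     2 * (A (blk n d nk b) a b + A (blk n d nk b) b a) - 2 * (A (blk n d nk a) a b + A (blk n d nk a) b a)"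
proof -
  let ?p = "blk n d nk a" and ?q = "blk n d nk b"
  let ?f = "\<lambda>k. (blk_sign n d nk k b - blk_sign n d nk k a) * (A k a b + A k b a)"
  have "a \<noteq> b"
    using ab by auto
  then have "(\<Sum>k\<in>{1..d+1}. frob n (A k) (conj_deriv n (elem_skew a b) (Jmat n d nk k) mzero))
      = (\<Sum>k\<in>{1..d+1}. ?f k)"
    using a b by (simp add: frob_conj_deriv_elem_skew)
  also have "\<dots> = (\<Sum>k\<in>{?p, ?q}. ?f k)"
    using blk_bounds[OF a, of d nk] blk_bounds[OF b, of d nk]
    by (intro sum.mono_neutral_right) (auto simp: blk_sign_def)
  also have "\<dots> = 2 * (A ?q a b + A ?q b a) - 2 * (A ?p a b + A ?p b a)"
    using ab by (simp add: blk_sign_def algebra_simps)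
  finally show ?thesis .
qed

lemma conj_deriv_comm_Jmat_apply:
  assumes "a < n" "b < n"
  shows "conj_deriv n L (comm n X (Jmat n d nk k)) C a b =
    (\<Sum>c<n. L a c * X c b * (blk_sign n d nk k b - blk_sign n d nk k c)
       + X a c * L b c * (blk_sign n d nk k c - blk_sign n d nk k a)) + C a b"
  using assms
  by (simp add: conj_deriv_def madd_def mmul_def comm_Jmat_apply mtr_def sum.distrib mult_ac add_ac)

lemma conj_deriv_comm_Jmat_block_diff:
  fixes X1 :: rmat
  assumes L: "skew n L" "diag_blocks_zero n d nk L" and X: "diag_blocks_zero n d nk X"
    and a: "a < n" and b: "b < n" and ab: "blk n d nk a \<noteq> blk n d nk b"
  defines "A k \<equiv> conj_deriv n L (comm n X (Jmat n d nk k)) (comm n X1 (Jmat n d nk k))"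
  shows "A (blk n d nk a) a b - A (blk n d nk b) a b = 2 * comm n X L a b - 4 * X1 a b"
proof -
  let ?p = "blk n d nk a" and ?q = "blk n d nk b"
  let ?s = "blk_sign n d nk"
  define f where "f k c = L a c * X c b * (?s k b - ?s k c) + X a c * L b c * (?s k c - ?s k a)"
    for k c
  have signs: "?s ?p a = 1" "?s ?q a = -1" "?s ?p b = -1" "?s ?q b = 1"
    using ab by (simp_all add: blk_sign_def)
  have f_diff: "f ?p c - f ?q c = 2 * (X a c * L c b - L a c * X c b)" if c: "c < n" for c
  proof -
    consider "blk n d nk c = ?p" | "blk n d nk c = ?q" | "blk n d nk c \<noteq> ?p" "blk n d nk c \<noteq> ?q"
      by blast
    then show ?thesis
    proof cases
      case 1
      then have "L a c = 0" "X a c = 0"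
        using diag_blocks_zero_apply[OF L(2) a c] diag_blocks_zero_apply[OF X a c] by auto
      then show ?thesis
        by (simp add: f_def)
    next
      case 2
      then have "X c b = 0" "L b c = 0" "L c b = 0"
        using diag_blocks_zero_apply[OF X c b] diag_blocks_zero_apply[OF L(2) b c]
          diag_blocks_zero_apply[OF L(2) c b] by auto
      then show ?thesis
        by (simp add: f_def)
    next
      case 3
      then show ?thesis
        using signs skew_apply[OF L(1), of b c] by (simp add: f_def blk_sign_def algebra_simps)
    qed
  qed
  have A_apply: "A k a b = (\<Sum>c<n. f k c) + comm n X1 (Jmat n d nk k) a b" for k
    using a b by (simp add: A_def f_def conj_deriv_comm_Jmat_apply)
  have "A ?p a b - A ?q a b
      = (\<Sum>c<n. f ?p c - f ?q c) + (comm n X1 (Jmat n d nk ?p) a b - comm n X1 (Jmat n d nk ?q) a b)"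
    unfolding A_apply sum_subtractf by linarith
  also have "(\<Sum>c<n. f ?p c - f ?q c) = (\<Sum>c<n. 2 * (X a c * L c b - L a c * X c b))"
    by (intro sum.cong refl f_diff) simp
  also have "\<dots> = 2 * comm n X L a b"
    using a b by (simp add: comm_def mdiff_def mmul_def sum_subtractf sum_distrib_left[symmetric])
  also have "comm n X1 (Jmat n d nk ?p) a b - comm n X1 (Jmat n d nk ?q) a b = - 4 * X1 a b"
    using a b signs by (simp add: comm_Jmat_apply)
  finally show ?thesis
    by simp
qed

lemma orthogonal_tangent_if_blocks_agree:
  assumes V0: "orth n V0"
    and A_agree: "\<And>a b. a < n \<Longrightarrow> b < n \<Longrightarrow> blk n d nk a \<noteq> blk n d nk b \<Longrightarrow>
      A (blk n d nk a) a b = A (blk n d nk b) a b"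
    and u: "u \<in> tangent n d nk (conj_tup n d V0 (Jmat n d nk))"
  shows "tinner n d (tup d (\<lambda>k. mconj n V0 (A k))) u = 0"
  unfolding tinner_tup_mconj
  using tangent_pullback_anticomm[OF V0 u] tangent_pullback_sum[OF V0 u] A_agree
  by (rule sum_frob_eq_0_if_blocks_agree)

lemma blocks_agree_sym_if_orthogonal_tangent:
  assumes V0: "orth n V0"
    and orthogonal: "\<And>u. u \<in> tangent n d nk (conj_tup n d V0 (Jmat n d nk)) \<Longrightarrow>
      tinner n d (tup d (\<lambda>k. mconj n V0 (A k))) u = 0"
    and a: "a < n" and b: "b < n" and ab: "blk n d nk a \<noteq> blk n d nk b"
  shows "A (blk n d nk a) a b + A (blk n d nk a) b a = A (blk n d nk b) a b + A (blk n d nk b) b a"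
proof -
  let ?W = "\<lambda>k. conj_deriv n (elem_skew a b) (Jmat n d nk k) mzero"
  have "a \<noteq> b"
    using ab by auto
  then have "tinner n d (tup d (\<lambda>k. mconj n V0 (A k))) (tup d (\<lambda>k. mconj n V0 (?W k))) = 0"
    by (intro orthogonal givens_tangent V0 a b)
  moreover have "mconj n (mtr V0) (tup d (\<lambda>k. mconj n V0 (?W k)) k) = ?W k" if "k \<in> {1..d+1}" for k
    using that V0 by (simp add: tup_def orth_mconj_cancel)
  ultimately have "(\<Sum>k\<in>{1..d+1}. frob n (A k) (?W k)) = 0"
    by (simp add: tinner_tup_mconj)
  then show ?thesis
    using sum_frob_conj_deriv_elem_skew[OF a b ab, of A] by simp
qed

lemma eq_mscale_offdiag_iff:
  assumes "is_mat n X1" "diag_blocks_zero n d nk X1" "is_mat n M"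
  shows "X1 = mscale c (offdiag n d nk M) \<longleftrightarrow>
    (\<forall>a<n. \<forall>b<n. blk n d nk a \<noteq> blk n d nk b \<longrightarrow> X1 a b = c * M a b)"
proof
  assume "X1 = mscale c (offdiag n d nk M)"
  then show "\<forall>a<n. \<forall>b<n. blk n d nk a \<noteq> blk n d nk b \<longrightarrow> X1 a b = c * M a b"
    by (simp add: mscale_def offdiag_def)
next
  assume off: "\<forall>a<n. \<forall>b<n. blk n d nk a \<noteq> blk n d nk b \<longrightarrow> X1 a b = c * M a b"
  show "X1 = mscale c (offdiag n d nk M)"
  proof (intro ext)
    fix a b
    show "X1 a b = mscale c (offdiag n d nk M) a b"
      using assms off diag_blocks_zero_apply[OF assms(2), of a b]
      by (cases "a < n \<and> b < n") (auto simp: mscale_def offdiag_def is_mat_def)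
  qed
qed

lemma orthogonal_tangent_iff:
  assumes V0: "orth n V0" and L: "skew n L" "diag_blocks_zero n d nk L"
    and X: "skew n X" "diag_blocks_zero n d nk X" and X1: "skew n X1" "diag_blocks_zero n d nk X1"
  defines "A k \<equiv> conj_deriv n L (comm n X (Jmat n d nk k)) (comm n X1 (Jmat n d nk k))"
  shows "(\<forall>u\<in>tangent n d nk (conj_tup n d V0 (Jmat n d nk)).
            tinner n d (tup d (\<lambda>k. mconj n V0 (A k))) u = 0)
    \<longleftrightarrow> X1 = mscale (1/2) (offdiag n d nk (comm n X L))" (is "?orthogonal \<longleftrightarrow> _")
proof -
  have diff: "A (blk n d nk a) a b - A (blk n d nk b) a b = 2 * comm n X L a b - 4 * X1 a b"
    if "a < n" "b < n" "blk n d nk a \<noteq> blk n d nk b" for a b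
    unfolding A_def by (rule conj_deriv_comm_Jmat_block_diff[OF L X(2) that])
  have "?orthogonal \<longleftrightarrow> (\<forall>a<n. \<forall>b<n. blk n d nk a \<noteq> blk n d nk b \<longrightarrow> X1 a b = 1/2 * comm n X L a b)"
  proof (intro iffI allI impI ballI)
    fix a b
    assume ?orthogonal and a: "a < n" and b: "b < n" and ab: "blk n d nk a \<noteq> blk n d nk b"
    have "A (blk n d nk a) a b + A (blk n d nk a) b a = A (blk n d nk b) a b + A (blk n d nk b) b a"
      using blocks_agree_sym_if_orthogonal_tangent[OF V0 _ a b ab] \<open>?orthogonal\<close> by blast
    then show "X1 a b = 1/2 * comm n X L a b"
      using diff[OF a b ab] diff[OF b a ab[symmetric]] skew_apply[OF X1(1), of b a]
        skew_apply[OF skew_comm[OF X(1) L(1)], of b a] by linarith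
  next
    fix u
    assume "\<forall>a<n. \<forall>b<n. blk n d nk a \<noteq> blk n d nk b \<longrightarrow> X1 a b = 1/2 * comm n X L a b"
      and u: "u \<in> tangent n d nk (conj_tup n d V0 (Jmat n d nk))"
    then show "tinner n d (tup d (\<lambda>k. mconj n V0 (A k))) u = 0"
      using diff by (intro orthogonal_tangent_if_blocks_agree[OF V0 _ u]) fastforce
  qed
  also have "\<dots> \<longleftrightarrow> X1 = mscale (1/2) (offdiag n d nk (comm n X L))"
    using X1 skew_comm[OF X(1) L(1)] by (intro eq_mscale_offdiag_iff[symmetric]) (auto simp: skew_def)
  finally show ?thesis .
qed

lemma parallel_along_iff:
  assumes c: "\<And>t. c t \<in> Flag n d nk" and Y': "\<And>t. tup_deriv Y (Y' t) t"
  shows "parallel_along n d nk c Y \<longleftrightarrow> (\<forall>t. \<forall>u\<in>tangent n d nk (c t). tinner n d (Y' t) u = 0)"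
proof -
  have tzero: "tzero \<in> tangent n d nk (c t)" for t
    using c unfolding tangent_def by (auto intro!: exI[of _ "\<lambda>s. c t"] simp: tup_deriv_def tzero_def)
  have tdiff_tzero: "tdiff v tzero = v" for v
    by (simp add: tdiff_def tzero_def)
  have "(\<exists>Z. tup_deriv Y Z t \<and> P Z) \<longleftrightarrow> P (Y' t)" for P t
    using Y' tup_deriv_unique by blast
  then show ?thesis
    by (simp add: parallel_along_def is_orth_proj_def tdiff_tzero tzero)
qed

theorem propositionB2:
  fixes n d :: nat and nk :: "nat \<Rightarrow> nat"
    and V V' X X' :: "real \<Rightarrow> rmat"
  assumes d_pos: "1 \<le> d"
    and nk_first: "0 < nk 1"
    and nk_mono: "\<forall>k. 1 \<le> k \<and> k < d \<longrightarrow> nk k < nk (Suc k)"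
    and nk_last: "nk d < n"
    and V_orth: "\<forall>t. orth n (V t)"
    and V_deriv: "\<forall>t. mat_deriv V (V' t) t"
    and Lambda_blocks: "\<forall>t. diag_blocks_zero n d nk (mmul n (mtr (V t)) (V' t))"
    and X_skew: "\<forall>t. skew n (X t)"
    and X_deriv: "\<forall>t. mat_deriv X (X' t) t"
    and X_blocks: "\<forall>t. diag_blocks_zero n d nk (X t)"
  shows "parallel_along n d nk
           (\<lambda>t. conj_tup n d (V t) (Jmat n d nk))
           (\<lambda>t. conj_tup n d (V t) (\<lambda>k. comm n (X t) (Jmat n d nk k)))
         \<longleftrightarrow> (\<forall>t. X' t = mscale (1/2)
                 (offdiag n d nk (comm n (X t) (mmul n (mtr (V t)) (V' t)))))"
proof -
  let ?J = "Jmat n d nk"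
  define L where "L t = mmul n (mtr (V t)) (V' t)" for t
  have flag: "conj_tup n d (V t) ?J \<in> Flag n d nk" for t
    using V_orth by (auto simp: Flag_def)
  have "is_mat n (V' t)" for t
    using V_deriv V_orth by (metis mat_deriv_is_mat orth_is_mat)
  then have Y_deriv: "tup_deriv (\<lambda>t. conj_tup n d (V t) (\<lambda>k. comm n (X t) (?J k)))
      (tup d (\<lambda>k. mconj n (V t) (conj_deriv n (L t) (comm n (X t) (?J k)) (comm n (X' t) (?J k))))) t" for t
    unfolding conj_tup_mconj L_def
    by (intro tup_deriv_tup mat_deriv_mconj mat_deriv_comm V_orth[rule_format] V_deriv[rule_format]
        X_deriv[rule_format])
  have L: "skew n (L t)" "diag_blocks_zero n d nk (L t)" for t
    using orth_deriv_skew V_orth V_deriv Lambda_blocks by (simp_all add: L_def)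
  have X': "skew n (X' t)" "diag_blocks_zero n d nk (X' t)" for t
    using X_deriv X_skew X_blocks by (metis mat_deriv_skew mat_deriv_diag_blocks_zero)+
  show ?thesis
    unfolding parallel_along_iff[OF flag Y_deriv] L_def[symmetric]
    using orthogonal_tangent_iff[OF V_orth[rule_format] L X_skew[rule_format] X_blocks[rule_format] X']
    by simp
qed

end
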